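(* Let $n>2k$ and $\ell$ be integers with $k\ge\ell\ge 2$, $X=\{1,\dots,n\}$. Let $\mathcal F\subset\binom{X}{k}$ be a saturated intersecting family, let $\mathcal B=\mathcal B(\mathcal F)$, and let $t=\min\{|B|\colon B\in\mathcal B\}$. Assume $t\ge 2$ and $\tau(\mathcal B^{(\le\ell)})\ge 2$. Then $$|\mathcal B^{(\ell)}|\le t\cdot\ell\cdot k^{\ell-2}.$$
   Context: $\binom{X}{k}$ is the family of $k$-subsets of $X$. A family is intersecting if any two of its members intersect. For $\mathcal G\subset 2^X$, $\mathcal T(\mathcal G):=\{T\subset X\colon |T|\le k,\ T\cap G\neq\emptyset \text{ for all } G\in\mathcal G\}$. An intersecting family $\mathcal F\subset\binom{X}{k}$ is saturated if for every $G\in\binom{X}{k}\setminus\mathcal F$ the family $\mathcal F\cup\{G\}$ is not intersecting. $\mathcal B(\mathcal F)$ denotes the family of inclusion-minimal members of $\mathcal T(\mathcal F)$. For a family $\mathcal H$, $\mathcal H^{(i)}:=\{H\in\mathcal H\colon |H|=i\}$ and $\mathcal H^{(\le \ell)}:=\bigcup_{i=1}^{\ell}\mathcal H^{(i)}$. The covering number $\tau(\mathcal H)$ is the minimum size of a set $T$ with $T\cap H\neq\emptyset$ for all $H\in\mathcal H$ (so $\tau(\mathcal H)\ge 2$ means $\mathcal H$ is nonempty and no single element lies in all members of $\mathcal H$). *)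

theory Defs
  imports Main
begin

definition k_subsets :: "'a set \<Rightarrow> nat \<Rightarrow> 'a set set" where
  "k_subsets X k = {A. A \<subseteq> X \<and> card A = k}"

definition intersecting :: "'a set set \<Rightarrow> bool" where
  "intersecting F \<longleftrightarrow> (\<forall>A\<in>F. \<forall>B\<in>F. A \<inter> B \<noteq> {})"

definition saturated :: "'a set \<Rightarrow> nat \<Rightarrow> 'a set set \<Rightarrow> bool" where
  "saturated X k F \<longleftrightarrow> F \<subseteq> k_subsets X k \<and> intersecting F \<and>
     (\<forall>G \<in> k_subsets X k - F. \<not> intersecting (F \<union> {G}))"

definition transversals :: "'a set \<Rightarrow> nat \<Rightarrow> 'a set set \<Rightarrow> 'a set set" where
  "transversals X k G = {T. T \<subseteq> X \<and> card T \<le> k \<and> (\<forall>A\<in>G. T \<inter> A \<noteq> {})}"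

definition minimal_transversals :: "'a set \<Rightarrow> nat \<Rightarrow> 'a set set \<Rightarrow> 'a set set" where
  "minimal_transversals X k F =
     {T \<in> transversals X k F. \<forall>S \<in> transversals X k F. S \<subseteq> T \<longrightarrow> S = T}"

definition layer :: "'a set set \<Rightarrow> nat \<Rightarrow> 'a set set" where
  "layer H i = {A \<in> H. card A = i}"

definition layer_le :: "'a set set \<Rightarrow> nat \<Rightarrow> 'a set set" where
  "layer_le H l = (\<Union>i\<in>{1..l}. layer H i)"

definition covering_number :: "'a set set \<Rightarrow> nat" where
  "covering_number H = (LEAST m. \<exists>T. finite T \<and> card T = m \<and> (\<forall>A\<in>H. T \<inter> A \<noteq> {}))"

end

theory Submission
  imports Defs
begin

text \<open>
  Members of \<open>\<B> = \<B>(\<F>)\<close> pairwise intersect: if two transversals were disjoint, one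
  of them could be extended inside the complement of the other (using \<open>|X| \<ge> 2k\<close>) to a
  \<open>k\<close>-set meeting every member of \<open>\<F>\<close>, which by saturation lies in \<open>\<F>\<close>, so the
  other transversal would meet it.  As \<open>\<tau>\<close> of the members of size at most \<open>l\<close> is at least 2,
  every \<open>x\<close> is missed by some \<open>C\<^sub>x \<in> \<B>\<close> with \<open>|C\<^sub>x| \<le> l\<close>.  Fix \<open>B\<^sub>0 \<in> \<B>\<close> with
  \<open>|B\<^sub>0| = t\<close>: each \<open>B \<in> \<B>\<close> of size \<open>l\<close> meets \<open>B\<^sub>0\<close> in some \<open>x\<close> and \<open>C\<^sub>x\<close> in some
  \<open>y \<noteq> x\<close>, so it contains one of at most \<open>t l\<close> pairs \<open>{x, y}\<close>.  Finally, a set \<open>S\<close> strictly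
  inside a minimal transversal misses some \<open>A \<in> \<F>\<close>, and every minimal transversal
  containing \<open>S\<close> contains one of the \<open>k\<close> points of \<open>A\<close> as well; iterating, at most
  \<open>k ^ (l - |S|)\<close> members of size \<open>l\<close> contain \<open>S\<close>.
\<close>

lemma card_UN_le_card_mult:
  assumes "finite I" and "\<And>i. i \<in> I \<Longrightarrow> card (A i) \<le> p"
  shows "card (\<Union>i\<in>I. A i) \<le> card I * p"
  using order_trans[OF card_UN_le[OF assms(1)] sum_bounded_above[of I "\<lambda>i. card (A i)" p]]
    assms(2) by simp

lemma finite_minimal_transversals:
  "finite X \<Longrightarrow> finite (minimal_transversals X k F)"
  by (rule finite_subset[of _ "Pow X"])
    (auto simp: minimal_transversals_def transversals_def)

lemma minimal_transversalD:
  assumes "B \<in> minimal_transversals X k F"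
  shows "B \<in> transversals X k F" and "B \<subseteq> X" and "\<And>A. A \<in> F \<Longrightarrow> B \<inter> A \<noteq> {}"
  using assms by (auto simp: minimal_transversals_def transversals_def)

lemma transversals_intersect:
  assumes sat: "saturated X k F" and "finite X" and "2 * k \<le> card X" and "0 < k"
    and T1: "T1 \<in> transversals X k F" and T2: "T2 \<in> transversals X k F"
  shows "T1 \<inter> T2 \<noteq> {}"
proof
  assume disjoint: "T1 \<inter> T2 = {}"
  have "card (X - T2) = card X - card T2"
    using T2 \<open>finite X\<close> by (auto simp: transversals_def card_Diff_subset finite_subset)
  then have "k \<le> card (X - T2)"
    using T2 \<open>2 * k \<le> card X\<close> by (auto simp: transversals_def)
  then obtain G where G: "T1 \<subseteq> G" "G \<subseteq> X - T2" "card G = k"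
    using exists_subset_between[of T1 k "X - T2"] T1 disjoint \<open>finite X\<close>
    by (auto simp: transversals_def)
  have G_k_subset: "G \<in> k_subsets X k"
    using G by (auto simp: k_subsets_def)
  have "\<forall>A\<in>F. G \<inter> A \<noteq> {}"
    using G(1) T1 unfolding transversals_def by blast
  moreover have "G \<noteq> {}"
    using G(3) \<open>0 < k\<close> by auto
  ultimately have "intersecting (F \<union> {G})"
    using sat unfolding saturated_def intersecting_def by (auto simp: Int_commute)
  then have "G \<in> F"
    using sat G_k_subset by (auto simp: saturated_def)
  then have "T2 \<inter> G \<noteq> {}"
    using T2 by (auto simp: transversals_def)
  then show False
    using G by blast
qed

lemma minimal_transversal_psubset_misses:
  assumes "finite X" and "B \<in> minimal_transversals X k F" and "S \<subset> B"
  shows "\<exists>A\<in>F. S \<inter> A = {}"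
proof -
  have B: "B \<subseteq> X" "card B \<le> k" "\<forall>T\<in>transversals X k F. T \<subseteq> B \<longrightarrow> T = B"
    using assms(2) by (auto simp: minimal_transversals_def transversals_def)
  then have "card S \<le> k"
    using assms(1,3) card_mono[of B S] finite_subset by fastforce
  then have "S \<notin> transversals X k F"
    using B assms(3) by blast
  then show ?thesis
    using B assms(3) \<open>card S \<le> k\<close> by (auto simp: transversals_def)
qed

lemma card_minimal_transversals_containing_le:
  assumes "F \<subseteq> k_subsets X k" and "finite X" and "l \<le> k" and "card S \<le> l"
  shows "card {B \<in> layer (minimal_transversals X k F) l. S \<subseteq> B} \<le> k ^ (l - card S)"
  using assms(4)
proof (induction "l - card S" arbitrary: S)
  case 0
  have "{B \<in> layer (minimal_transversals X k F) l. S \<subseteq> B} \<subseteq> {S}"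
  proof
    fix B assume "B \<in> {B \<in> layer (minimal_transversals X k F) l. S \<subseteq> B}"
    then have B: "B \<subseteq> X" "card B = card S" "S \<subseteq> B"
      using "0.hyps" "0.prems" by (auto simp: layer_def dest: minimal_transversalD(2))
    then show "B \<in> {S}"
      using card_subset_eq[of B S] finite_subset[OF B(1) \<open>finite X\<close>] by simp
  qed
  then have "card {B \<in> layer (minimal_transversals X k F) l. S \<subseteq> B} \<le> card {S}"
    by (rule card_mono[rotated]) simp
  then show ?case
    using "0.hyps" by simp
next
  case (Suc d S)
  let ?L = "layer (minimal_transversals X k F) l"
  show ?case
  proof (cases "{B \<in> ?L. S \<subseteq> B} = {}")
    case True
    show ?thesis unfolding True by simp
  next
    case False
    then obtain B0 where B0: "B0 \<in> minimal_transversals X k F" "card B0 = l" "S \<subseteq> B0"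
      by (auto simp: layer_def)
    have "card S < l"
      using Suc.hyps(2) by linarith
    then have "S \<subset> B0"
      using B0(2,3) by auto
    then obtain A where A: "A \<in> F" "S \<inter> A = {}"
      using minimal_transversal_psubset_misses[OF \<open>finite X\<close> B0(1)] by blast
    have "finite A" "card A = k"
      using A(1) assms(1,2) by (auto simp: k_subsets_def intro: finite_subset)
    have "finite S"
      using B0 \<open>finite X\<close> minimal_transversalD(2) finite_subset by metis
    have "\<forall>B\<in>?L. B \<inter> A \<noteq> {}"
      using A(1) by (auto simp: layer_def dest: minimal_transversalD(3))
    then have "{B \<in> ?L. S \<subseteq> B} \<subseteq> (\<Union>y\<in>A. {B \<in> ?L. insert y S \<subseteq> B})"
      by auto
    moreover have "finite (\<Union>y\<in>A. {B \<in> ?L. insert y S \<subseteq> B})"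
      using finite_minimal_transversals[OF \<open>finite X\<close>] \<open>finite A\<close> by (simp add: layer_def)
    ultimately have "card {B \<in> ?L. S \<subseteq> B} \<le> card (\<Union>y\<in>A. {B \<in> ?L. insert y S \<subseteq> B})"
      by (rule card_mono[rotated])
    also have "\<dots> \<le> card A * k ^ d"
    proof (rule card_UN_le_card_mult[OF \<open>finite A\<close>])
      fix y assume "y \<in> A"
      then have "y \<notin> S"
        using A(2) by blast
      then have "card (insert y S) = Suc (card S)"
        using \<open>finite S\<close> by simp
      then have d: "d = l - card (insert y S)" and "card (insert y S) \<le> l"
        using Suc.hyps(2) \<open>card S < l\<close> by linarith+
      then show "card {B \<in> ?L. insert y S \<subseteq> B} \<le> k ^ d"
        using Suc.hyps(1)[OF d] by simp
    qed
    also have "\<dots> = k ^ (l - card S)"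
      using \<open>card A = k\<close> Suc.hyps(2)[symmetric] by simp
    finally show ?thesis .
  qed
qed

lemma card_le_by_pair_degrees:
  assumes meet: "\<And>B B'. B \<in> M \<Longrightarrow> B' \<in> M \<Longrightarrow> B \<inter> B' \<noteq> {}"
    and finite_members: "\<And>B. B \<in> M \<Longrightarrow> finite B"
    and "L \<subseteq> M" and "finite L" and "B0 \<in> M"
    and avoid: "\<And>x. \<exists>C\<in>M. x \<notin> C \<and> card C \<le> m"
    and pair_degree: "\<And>x y. x \<noteq> y \<Longrightarrow> card {B \<in> L. {x, y} \<subseteq> B} \<le> p"
  shows "card L \<le> card B0 * m * p"
proof -
  obtain C where C: "\<And>x. C x \<in> M \<and> x \<notin> C x \<and> card (C x) \<le> m"
    using avoid by metis
  have cover: "L \<subseteq> (\<Union>x\<in>B0. \<Union>y\<in>C x. {B \<in> L. {x, y} \<subseteq> B})"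
  proof
    fix B assume "B \<in> L"
    then have "B \<in> M"
      using \<open>L \<subseteq> M\<close> by blast
    obtain x where "x \<in> B" "x \<in> B0"
      using meet[OF \<open>B \<in> M\<close> \<open>B0 \<in> M\<close>] by blast
    moreover obtain y where "y \<in> B" "y \<in> C x"
      using meet[OF \<open>B \<in> M\<close>, of "C x"] C by blast
    ultimately show "B \<in> (\<Union>x\<in>B0. \<Union>y\<in>C x. {B \<in> L. {x, y} \<subseteq> B})"
      using \<open>B \<in> L\<close> by blast
  qed
  have "card L \<le> card (\<Union>x\<in>B0. \<Union>y\<in>C x. {B \<in> L. {x, y} \<subseteq> B})"
    by (rule card_mono[OF _ cover]) (rule finite_subset[OF _ \<open>finite L\<close>], blast)
  also have "\<dots> \<le> card B0 * (m * p)"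
  proof (rule card_UN_le_card_mult[OF finite_members[OF \<open>B0 \<in> M\<close>]])
    fix x
    have "card (\<Union>y\<in>C x. {B \<in> L. {x, y} \<subseteq> B}) \<le> card (C x) * p"
    proof (rule card_UN_le_card_mult)
      show "finite (C x)"
        using C finite_members by blast
      fix y assume "y \<in> C x"
      then have "x \<noteq> y"
        using C by blast
      then show "card {B \<in> L. {x, y} \<subseteq> B} \<le> p"
        by (rule pair_degree)
    qed
    also have "\<dots> \<le> m * p"
      using C by simp
    finally show "card (\<Union>y\<in>C x. {B \<in> L. {x, y} \<subseteq> B}) \<le> m * p" .
  qed
  finally show ?thesis
    by (simp add: mult.assoc)
qed

lemma covering_number_ge_2_imp_avoiding_member:
  assumes "covering_number H \<ge> 2"
  shows "\<exists>A\<in>H. x \<notin> A"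
proof (rule ccontr)
  assume "\<not> (\<exists>A\<in>H. x \<notin> A)"
  then have "\<exists>T. finite T \<and> card T = 1 \<and> (\<forall>A\<in>H. T \<inter> A \<noteq> {})"
    by (intro exI[of _ "{x}"]) auto
  then have "covering_number H \<le> 1"
    unfolding covering_number_def by (rule Least_le)
  then show False
    using assms by simp
qed

theorem lemma2p3:
  fixes n k l t :: nat and F :: "nat set set"
  assumes "n > 2 * k" and "k \<ge> l" and "l \<ge> 2"
    and "saturated {1..n} k F"
    and "t = Min (card ` minimal_transversals {1..n} k F)"
    and "t \<ge> 2"
    and "covering_number (layer_le (minimal_transversals {1..n} k F) l) \<ge> 2"
  shows "card (layer (minimal_transversals {1..n} k F) l) \<le> t * l * k ^ (l - 2)"
proof -
  define M where "M = minimal_transversals {1..n} k F"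
  have "finite M"
    unfolding M_def by (rule finite_minimal_transversals) simp
  have finite_members: "finite B" if "B \<in> M" for B
    using that unfolding M_def by (metis finite_atLeastAtMost finite_subset minimal_transversalD(2))
  have "2 * k \<le> card {1..n}" "0 < k"
    using assms(1-3) by simp_all
  then have meet: "B \<inter> B' \<noteq> {}" if "B \<in> M" "B' \<in> M" for B B'
    using transversals_intersect[OF assms(4)] that minimal_transversalD(1)
    unfolding M_def by blast
  have avoid: "\<exists>C\<in>M. x \<notin> C \<and> card C \<le> l" for x
    using covering_number_ge_2_imp_avoiding_member[OF assms(7), of x]
    by (auto simp: M_def layer_le_def layer_def)
  then have "M \<noteq> {}"
    by blast
  then have "t \<in> card ` M"
    using Min_in[of "card ` M"] \<open>finite M\<close> assms(5) by (simp add: M_def)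
  then obtain B0 where "B0 \<in> M" "card B0 = t" by blast
  have pair_degree: "card {B \<in> layer M l. {x, y} \<subseteq> B} \<le> k ^ (l - 2)" if "x \<noteq> y" for x y
  proof -
    have "card {x, y} = 2"
      using that by simp
    then show ?thesis
      using card_minimal_transversals_containing_le[of F "{1..n}" k l "{x, y}"] assms(2-4)
      by (simp add: M_def saturated_def)
  qed
  have layer: "layer M l \<subseteq> M" "finite (layer M l)"
    using \<open>finite M\<close> by (auto simp: layer_def)
  show ?thesis
    using card_le_by_pair_degrees[OF meet finite_members layer \<open>B0 \<in> M\<close> avoid pair_degree]
      \<open>card B0 = t\<close> by (simp add: M_def)
qed

end
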